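(* Let $E$ be a pseudo effect algebra satisfying (RDP) and let $m\in\mathcal J(E)$. Define $v_m:E\to\mathbb R$ by $$v_m(x):=\sup\{|m(x_1)|+\cdots+|m(x_n)|:\ x=x_1+\cdots+x_n,\ x_1,\dots,x_n\in E,\ n\ge1\}.$$ Then $v_m=|m|$, where $|m|:=m^++m^-$, $m^+:=m\vee0$ and $m^-:=-(m\wedge0)$ in $\mathcal J(E)$.
   Context: Pseudo effect algebra: partial algebra $(E;+,0,1)$ such that for all $a,b,c$: (i) $a+b$ and $(a+b)+c$ exist iff $b+c$ and $a+(b+c)$ exist, and then they are equal; (ii) there is exactly one $d$ and one $e$ with $a+d=e+a=1$; (iii) if $a+b$ exists there are $d,e$ with $a+b=d+a=b+e$; (iv) if $1+a$ or $a+1$ exists then $a=0$. (RDP): whenever $a_1+a_2=b_1+b_2$ there are $d_1,\dots,d_4$ with $d_1+d_2=a_1$, $d_3+d_4=a_2$, $d_1+d_3=b_1$, $d_2+d_4=b_2$. Signed measure: $m:E\to\mathbb R$ additive on defined sums; measure: nonnegative signed measure. $\mathcal J(E)$: signed measures that are differences of two measures, ordered by $m_1\le^+m_2$ iff $m_2-m_1$ is a measure; under (RDP) it is a lattice-ordered group with zero element the zero measure. *)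

theory Defs
  imports Main "HOL-Library.Extended_Real" Complex_Main
begin

text \<open>A partial algebra on carrier E: the partial sum is p a b (None = undefined).\<close>

definition pseudo_effect_algebra ::
  "'a set \<Rightarrow> ('a \<Rightarrow> 'a \<Rightarrow> 'a option) \<Rightarrow> 'a \<Rightarrow> 'a \<Rightarrow> bool" where
  "pseudo_effect_algebra E p z u \<longleftrightarrow>
     z \<in> E \<and> u \<in> E \<and>
     (\<forall>a\<in>E. \<forall>b\<in>E. \<forall>c. p a b = Some c \<longrightarrow> c \<in> E) \<and>
     (\<forall>a\<in>E. \<forall>b\<in>E. \<forall>c\<in>E.
        Option.bind (p a b) (\<lambda>ab. p ab c) = Option.bind (p b c) (\<lambda>bc. p a bc)) \<and>
     (\<forall>a\<in>E. (\<exists>!d. d \<in> E \<and> p a d = Some u) \<and> (\<exists>!e. e \<in> E \<and> p e a = Some u)) \<and>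
     (\<forall>a\<in>E. \<forall>b\<in>E. \<forall>s. p a b = Some s \<longrightarrow>
        (\<exists>d\<in>E. \<exists>e\<in>E. p d a = Some s \<and> p b e = Some s)) \<and>
     (\<forall>a\<in>E. (p u a \<noteq> None \<or> p a u \<noteq> None) \<longrightarrow> a = z)"

definition RDP :: "'a set \<Rightarrow> ('a \<Rightarrow> 'a \<Rightarrow> 'a option) \<Rightarrow> bool" where
  "RDP E p \<longleftrightarrow>
     (\<forall>a1\<in>E. \<forall>a2\<in>E. \<forall>b1\<in>E. \<forall>b2\<in>E.
        p a1 a2 \<noteq> None \<and> p a1 a2 = p b1 b2 \<longrightarrow>
        (\<exists>d1\<in>E. \<exists>d2\<in>E. \<exists>d3\<in>E. \<exists>d4\<in>E.
           p d1 d2 = Some a1 \<and> p d3 d4 = Some a2 \<and>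
           p d1 d3 = Some b1 \<and> p d2 d4 = Some b2))"

definition signed_measure :: "'a set \<Rightarrow> ('a \<Rightarrow> 'a \<Rightarrow> 'a option) \<Rightarrow> ('a \<Rightarrow> real) \<Rightarrow> bool" where
  "signed_measure E p m \<longleftrightarrow>
     (\<forall>a\<in>E. \<forall>b\<in>E. \<forall>c. p a b = Some c \<longrightarrow> m c = m a + m b)"

definition is_measure :: "'a set \<Rightarrow> ('a \<Rightarrow> 'a \<Rightarrow> 'a option) \<Rightarrow> ('a \<Rightarrow> real) \<Rightarrow> bool" where
  "is_measure E p m \<longleftrightarrow> signed_measure E p m \<and> (\<forall>x\<in>E. 0 \<le> m x)"

definition in_J :: "'a set \<Rightarrow> ('a \<Rightarrow> 'a \<Rightarrow> 'a option) \<Rightarrow> ('a \<Rightarrow> real) \<Rightarrow> bool" where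
  "in_J E p m \<longleftrightarrow> (\<exists>m1 m2. is_measure E p m1 \<and> is_measure E p m2 \<and>
                        (\<forall>x\<in>E. m x = m1 x - m2 x))"

definition le_J :: "'a set \<Rightarrow> ('a \<Rightarrow> 'a \<Rightarrow> 'a option) \<Rightarrow> ('a \<Rightarrow> real) \<Rightarrow> ('a \<Rightarrow> real) \<Rightarrow> bool" where
  "le_J E p m1 m2 \<longleftrightarrow> is_measure E p (\<lambda>x. m2 x - m1 x)"

definition is_sup_J where
  "is_sup_J E p m1 m2 s \<longleftrightarrow> in_J E p s \<and> le_J E p m1 s \<and> le_J E p m2 s \<and>
     (\<forall>t. in_J E p t \<and> le_J E p m1 t \<and> le_J E p m2 t \<longrightarrow> le_J E p s t)"

definition is_inf_J where
  "is_inf_J E p m1 m2 s \<longleftrightarrow> in_J E p s \<and> le_J E p s m1 \<and> le_J E p s m2 \<and>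
     (\<forall>t. in_J E p t \<and> le_J E p t m1 \<and> le_J E p t m2 \<longrightarrow> le_J E p t s)"

text \<open>x1 + (x2 + (... + xn)) for a nonempty list; None if undefined or empty.\<close>
fun psum :: "('a \<Rightarrow> 'a \<Rightarrow> 'a option) \<Rightarrow> 'a list \<Rightarrow> 'a option" where
  "psum p [] = None"
| "psum p [a] = Some a"
| "psum p (a # b # xs) = Option.bind (psum p (b # xs)) (p a)"

definition var_m :: "'a set \<Rightarrow> ('a \<Rightarrow> 'a \<Rightarrow> 'a option) \<Rightarrow> ('a \<Rightarrow> real) \<Rightarrow> 'a \<Rightarrow> real" where
  "var_m E p m x = Sup {(\<Sum>y\<leftarrow>xs. \<bar>m y\<bar>) | xs. xs \<noteq> [] \<and> set xs \<subseteq> E \<and> psum p xs = Some x}"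

end

theory Submission
  imports Defs
begin

(* For x in E put  pos x = sup { m a | a + b = x }.  The sup is finite because
   m = m1 - m2 with measures m1, m2 gives m a <= m1 x.  The function pos is
   additive: pos (x + y) <= pos x + pos y by (RDP), and conversely, because
   left summands a of x and c of y combine to a left summand a + c of x + y
   (associativity and axiom (iii)).  Since pos >= m, pos >= 0 and pos lies
   below every common upper bound of m and 0, pos = m v 0 in J(E); likewise
   m - pos = m ^ 0.  Finally |m y| <= pos y + (pos y - m y), whose right-hand
   side is additive, bounds every sum |m x_1| + ... + |m x_n| over
   decompositions x = x_1 + ... + x_n by 2 pos x - m x, and two-term
   decompositions x = a + b already approach that value. *)

lemma signed_measure_add_eq:
  "signed_measure E p f \<Longrightarrow> a \<in> E \<Longrightarrow> b \<in> E \<Longrightarrow> p a b = Some c \<Longrightarrow> f c = f a + f b"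
  unfolding signed_measure_def by blast

lemma signed_measure_plus:
  "signed_measure E p f \<Longrightarrow> signed_measure E p g \<Longrightarrow> signed_measure E p (\<lambda>x. f x + g x)"
  and signed_measure_minus:
  "signed_measure E p f \<Longrightarrow> signed_measure E p g \<Longrightarrow> signed_measure E p (\<lambda>x. f x - g x)"
  unfolding signed_measure_def by fastforce+

lemma is_measureI:
  "signed_measure E p f \<Longrightarrow> (\<And>x. x \<in> E \<Longrightarrow> 0 \<le> f x) \<Longrightarrow> is_measure E p f"
  unfolding is_measure_def by blast

lemma zero_measure: "is_measure E p (\<lambda>_. 0)"
  unfolding is_measure_def signed_measure_def by simp

section \<open>Pseudo effect algebras\<close>

locale pseudo_effect_alg =
  fixes E :: "'a set" and p :: "'a \<Rightarrow> 'a \<Rightarrow> 'a option" and z u :: 'a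
  assumes pea: "pseudo_effect_algebra E p z u"
begin

lemma axioms_split:
  "z \<in> E" "u \<in> E"
  "\<forall>a\<in>E. \<forall>b\<in>E. \<forall>c. p a b = Some c \<longrightarrow> c \<in> E"
  "\<forall>a\<in>E. \<forall>b\<in>E. \<forall>c\<in>E.
     Option.bind (p a b) (\<lambda>ab. p ab c) = Option.bind (p b c) (\<lambda>bc. p a bc)"
  "\<forall>a\<in>E. (\<exists>!d. d \<in> E \<and> p a d = Some u) \<and> (\<exists>!e. e \<in> E \<and> p e a = Some u)"
  "\<forall>a\<in>E. \<forall>b\<in>E. \<forall>s. p a b = Some s \<longrightarrow>
     (\<exists>d\<in>E. \<exists>e\<in>E. p d a = Some s \<and> p b e = Some s)"
  "\<forall>a\<in>E. (p u a \<noteq> None \<or> p a u \<noteq> None) \<longrightarrow> a = z"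
  using pea unfolding pseudo_effect_algebra_def by - (elim conjE, assumption)+

lemma zero_in: "z \<in> E" and unit_in: "u \<in> E"
  using axioms_split(1,2) .

lemma sum_closed: "a \<in> E \<Longrightarrow> b \<in> E \<Longrightarrow> p a b = Some c \<Longrightarrow> c \<in> E"
  using axioms_split(3) by blast

lemma assoc:
  "a \<in> E \<Longrightarrow> b \<in> E \<Longrightarrow> c \<in> E \<Longrightarrow>
   Option.bind (p a b) (\<lambda>ab. p ab c) = Option.bind (p b c) (\<lambda>bc. p a bc)"
  using axioms_split(4) by blast

lemma complement_right: "a \<in> E \<Longrightarrow> \<exists>!d. d \<in> E \<and> p a d = Some u"
  and complement_left: "a \<in> E \<Longrightarrow> \<exists>!e. e \<in> E \<and> p e a = Some u"
  using axioms_split(5) by blast+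

lemma commute_right:
  "a \<in> E \<Longrightarrow> b \<in> E \<Longrightarrow> p a b = Some s \<Longrightarrow> \<exists>e\<in>E. p b e = Some s"
  using axioms_split(6) by blast

lemma unit_summand_zero: "a \<in> E \<Longrightarrow> p u a \<noteq> None \<or> p a u \<noteq> None \<Longrightarrow> a = z"
  using axioms_split(7) by blast

lemma assoc_l:
  assumes "a \<in> E" "b \<in> E" "c \<in> E" "p a b = Some ab" "p ab c = Some s"
  shows "\<exists>bc. p b c = Some bc \<and> p a bc = Some s"
  using assoc[OF assms(1-3)] assms(4,5) by (cases "p b c") auto

lemma assoc_r:
  assumes "a \<in> E" "b \<in> E" "c \<in> E" "p b c = Some bc" "p a bc = Some s"
  shows "\<exists>ab. p a b = Some ab \<and> p ab c = Some s"
  using assoc[OF assms(1-3)] assms(4,5) by (cases "p a b") auto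

text \<open>By (iv), the complements of u are z.\<close>
lemma unit_plus_zero: "p u z = Some u"
proof -
  obtain d where "d \<in> E" "p u d = Some u" using complement_right[OF unit_in] by blast
  moreover from this have "d = z" using unit_summand_zero by blast
  ultimately show ?thesis by simp
qed

lemma zero_plus_unit: "p z u = Some u"
proof -
  obtain d where "d \<in> E" "p d u = Some u" using complement_left[OF unit_in] by blast
  moreover from this have "d = z" using unit_summand_zero by blast
  ultimately show ?thesis by simp
qed

text \<open>The element z is a two-sided neutral element; this follows by cancelling
  complements, since u + z = u = z + u.\<close>
lemma right_zero:
  assumes a: "a \<in> E" shows "p a z = Some a"
proof -
  obtain a' where a': "a' \<in> E" "p a' a = Some u" using complement_left[OF a] by blast
  obtain w where w: "p a z = Some w" "p a' w = Some u"
    using assoc_l[OF a'(1) a zero_in a'(2) unit_plus_zero] by blast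
  have "w \<in> E" using sum_closed[OF a zero_in w(1)] .
  with complement_right[OF a'(1)] a' w a have "w = a" by blast
  with w show ?thesis by simp
qed

lemma left_zero:
  assumes a: "a \<in> E" shows "p z a = Some a"
proof -
  obtain a' where a': "a' \<in> E" "p a a' = Some u" using complement_right[OF a] by blast
  obtain w where w: "p z a = Some w" "p w a' = Some u"
    using assoc_r[OF zero_in a a'(1) a'(2) zero_plus_unit] by blast
  have "w \<in> E" using sum_closed[OF zero_in a w(1)] .
  with complement_left[OF a'(1)] a' w a have "w = a" by blast
  with w show ?thesis by simp
qed

text \<open>If a is a left summand of x and c a left summand of y, then a + c is a
  left summand of x + y: rewrite  (a + b) + (c + d) = a + (c + e) + d  using
  b + c = c + e from axiom (iii).\<close>
lemma left_summands_combine: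
  assumes "a \<in> E" "b \<in> E" "p a b = Some x" "c \<in> E" "d \<in> E" "p c d = Some y"
    and "x \<in> E" "y \<in> E" "p x y = Some s"
  shows "\<exists>ac r. ac \<in> E \<and> r \<in> E \<and> p a c = Some ac \<and> p ac r = Some s"
proof -
  obtain w where w: "p b y = Some w" "p a w = Some s"
    using assoc_l[OF assms(1,2,8,3,9)] by blast
  obtain bc where bc: "p b c = Some bc" "p bc d = Some w"
    using assoc_r[OF assms(2,4,5,6) w(1)] by blast
  obtain e where e: "e \<in> E" "p c e = Some bc"
    using commute_right[OF assms(2,4) bc(1)] by blast
  obtain ed where ed: "p e d = Some ed" "p c ed = Some w"
    using assoc_l[OF assms(4) e(1) assms(5) e(2) bc(2)] by blast
  have edE: "ed \<in> E" using sum_closed[OF e(1) assms(5) ed(1)] .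
  obtain ac where ac: "p a c = Some ac" "p ac ed = Some s"
    using assoc_r[OF assms(1,4) edE ed(2) w(2)] by blast
  show ?thesis using ac edE sum_closed[OF assms(1,4) ac(1)] by blast
qed

lemma signed_measure_psum:
  assumes f: "signed_measure E p f"
  shows "set xs \<subseteq> E \<Longrightarrow> psum p xs = Some x \<Longrightarrow> x \<in> E \<and> (\<Sum>y\<leftarrow>xs. f y) = f x"
proof (induction xs arbitrary: x)
  case (Cons a ys)
  show ?case
  proof (cases ys)
    case (Cons b zs)
    with Cons.prems obtain y where y: "psum p ys = Some y" "p a y = Some x"
      by (cases "psum p ys") auto
    with Cons.IH Cons.prems have IH: "y \<in> E" "(\<Sum>y\<leftarrow>ys. f y) = f y" by auto
    have a: "a \<in> E" using Cons.prems(1) by simp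
    have "f x = f a + f y" using signed_measure_add_eq[OF f a IH(1) y(2)] .
    with sum_closed[OF a IH(1) y(2)] IH(2) show ?thesis by simp
  qed (use Cons.prems in simp)
qed simp

end

lemma in_J_signed_measure:
  assumes "in_J E p m" and "\<And>a b c. a \<in> E \<Longrightarrow> b \<in> E \<Longrightarrow> p a b = Some c \<Longrightarrow> c \<in> E"
  shows "signed_measure E p m"
proof -
  obtain m1 m2 where M: "is_measure E p m1" "is_measure E p m2" "\<forall>x\<in>E. m x = m1 x - m2 x"
    using assms(1) unfolding in_J_def by blast
  show ?thesis unfolding signed_measure_def
  proof (intro ballI allI impI)
    fix a b c assume abc: "a \<in> E" "b \<in> E" "p a b = Some c"
    have "m1 c = m1 a + m1 b" "m2 c = m2 a + m2 b"
      using M(1,2) abc unfolding is_measure_def signed_measure_def by blast+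
    then show "m c = m a + m b" using M(3) abc assms(2)[OF abc] by simp
  qed
qed

lemma le_J_antisym: "le_J E p f g \<Longrightarrow> le_J E p g f \<Longrightarrow> x \<in> E \<Longrightarrow> f x = g x"
  unfolding le_J_def is_measure_def by force

lemma is_sup_J_unique:
  assumes "is_sup_J E p f g s" "is_sup_J E p f g s'" "x \<in> E"
  shows "s x = s' x"
proof (rule le_J_antisym[OF _ _ assms(3)])
  show "le_J E p s s'" using assms(1,2) unfolding is_sup_J_def by simp
  show "le_J E p s' s" using assms(1,2) unfolding is_sup_J_def by simp
qed

lemma is_inf_J_unique:
  assumes "is_inf_J E p f g s" "is_inf_J E p f g s'" "x \<in> E"
  shows "s x = s' x"
proof (rule le_J_antisym[OF _ _ assms(3)])
  show "le_J E p s s'" using assms(1,2) unfolding is_inf_J_def by simp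
  show "le_J E p s' s" using assms(1,2) unfolding is_inf_J_def by simp
qed

section \<open>The positive part of a signed measure\<close>

locale jordan_setting = pseudo_effect_alg E p z u
  for E :: "'a set" and p :: "'a \<Rightarrow> 'a \<Rightarrow> 'a option" and z u :: 'a +
  fixes m :: "'a \<Rightarrow> real"
  assumes rdp: "RDP E p" and m_J: "in_J E p m"
begin

lemma m_signed: "signed_measure E p m"
  using m_J sum_closed by (rule in_J_signed_measure)

lemmas m_add = signed_measure_add_eq[OF m_signed]

lemma m_zero: "m z = 0"
  using m_add[OF zero_in zero_in left_zero[OF zero_in]] by simp

definition left_values :: "'a \<Rightarrow> real set" where
  "left_values x = {m a | a. a \<in> E \<and> (\<exists>b\<in>E. p a b = Some x)}"

definition pos :: "'a \<Rightarrow> real" where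
  "pos x = Sup (left_values x)"

text \<open>Writing m = m1 - m2, the value m a on a left summand a of x is at most m1 x.\<close>
lemma left_values_bdd: assumes "x \<in> E" shows "bdd_above (left_values x)"
proof -
  obtain m1 m2 where M: "is_measure E p m1" "is_measure E p m2" "\<forall>x\<in>E. m x = m1 x - m2 x"
    using m_J unfolding in_J_def by blast
  have "m a \<le> m1 x" if "a \<in> E" "b \<in> E" "p a b = Some x" for a b
  proof -
    have "m1 x = m1 a + m1 b" using M(1) that unfolding is_measure_def signed_measure_def by blast
    moreover have "0 \<le> m1 b" "0 \<le> m2 a" using M that unfolding is_measure_def by auto
    ultimately show ?thesis using M(3) that by auto
  qed
  then show ?thesis unfolding left_values_def by (intro bdd_aboveI[where M = "m1 x"]) blast
qed

lemma pos_upper: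
  assumes "a \<in> E" "b \<in> E" "p a b = Some x"
  shows "m a \<le> pos x"
  unfolding pos_def
proof (rule cSup_upper)
  show "m a \<in> left_values x" unfolding left_values_def using assms by blast
  show "bdd_above (left_values x)" using left_values_bdd[OF sum_closed[OF assms]] .
qed

lemma pos_least:
  assumes "x \<in> E" "\<And>a b. a \<in> E \<Longrightarrow> b \<in> E \<Longrightarrow> p a b = Some x \<Longrightarrow> m a \<le> K"
  shows "pos x \<le> K"
  unfolding pos_def
proof (rule cSup_least)
  show "left_values x \<noteq> {}"
    using assms(1) right_zero zero_in unfolding left_values_def by blast
next
  fix v assume "v \<in> left_values x"
  then obtain a b where v: "v = m a" "a \<in> E" "b \<in> E" "p a b = Some x"
    unfolding left_values_def by blast
  show "v \<le> K" using assms(2)[OF v(2-4)] v(1) by simp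
qed

text \<open>x = x + z and x = z + x give pos x >= m x and pos x >= 0.\<close>
lemma pos_ge_m: "x \<in> E \<Longrightarrow> m x \<le> pos x"
  by (rule pos_upper[OF _ zero_in right_zero])

lemma pos_ge_0: "x \<in> E \<Longrightarrow> 0 \<le> pos x"
  using pos_upper[OF zero_in _ left_zero] by (simp add: m_zero)

text \<open>Subadditivity via (RDP): a left summand of x + y splits as d1 + d2 with
  d1 a left summand of x and d2 a left summand of y.\<close>
lemma pos_subadditive:
  assumes x: "x \<in> E" and y: "y \<in> E" and s: "p x y = Some s"
  shows "pos s \<le> pos x + pos y"
proof (rule pos_least)
  show "s \<in> E" using sum_closed[OF x y s] .
  fix a b assume ab: "a \<in> E" "b \<in> E" "p a b = Some s"
  have "p a b \<noteq> None \<and> p a b = p x y" using ab(3) s by simp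
  then obtain d1 d2 d3 d4 where d: "d1 \<in> E" "d2 \<in> E" "d3 \<in> E" "d4 \<in> E"
    "p d1 d2 = Some a" "p d1 d3 = Some x" "p d2 d4 = Some y"
    using rdp[unfolded RDP_def, rule_format, OF ab(1,2) x y] by blast
  have "m a = m d1 + m d2" using m_add[OF d(1,2,5)] .
  also have "\<dots> \<le> pos x + pos y"
    using pos_upper[OF d(1,3,6)] pos_upper[OF d(2,4,7)] by simp
  finally show "m a \<le> pos x + pos y" .
qed

text \<open>Superadditivity: left summands of x and y combine to one of x + y.\<close>
lemma pos_superadditive:
  assumes x: "x \<in> E" and y: "y \<in> E" and s: "p x y = Some s"
  shows "pos x + pos y \<le> pos s"
proof -
  have "m a + m c \<le> pos s"
    if ab: "a \<in> E" "b \<in> E" "p a b = Some x" and cd: "c \<in> E" "d \<in> E" "p c d = Some y"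
    for a b c d
  proof -
    obtain ac r where ac: "ac \<in> E" "r \<in> E" "p a c = Some ac" "p ac r = Some s"
      using left_summands_combine[OF ab cd x y s] by blast
    show ?thesis using pos_upper[OF ac(1,2,4)] m_add[OF ab(1) cd(1) ac(3)] by simp
  qed
  note summands = this
  have "pos y \<le> pos s - m a" if a: "a \<in> E" "b \<in> E" "p a b = Some x" for a b
  proof (rule pos_least[OF y])
    fix c d assume "c \<in> E" "d \<in> E" "p c d = Some y"
    from summands[OF a this] show "m c \<le> pos s - m a" by simp
  qed
  then have "pos x \<le> pos s - pos y"
    by (intro pos_least[OF x]) (simp add: algebra_simps)
  then show ?thesis by simp
qed

lemma pos_signed: "signed_measure E p pos"
  unfolding signed_measure_def
proof (intro ballI allI impI)
  fix a b c assume abc: "a \<in> E" "b \<in> E" "p a b = Some c"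
  show "pos c = pos a + pos b"
    using pos_subadditive[OF abc] pos_superadditive[OF abc] by (rule antisym)
qed

lemma pos_measure: "is_measure E p pos"
  using pos_signed pos_ge_0 by (rule is_measureI)

lemma pos_minus_m_measure: "is_measure E p (\<lambda>x. pos x - m x)"
  by (rule is_measureI[OF signed_measure_minus[OF pos_signed m_signed]]) (simp add: pos_ge_m)

lemma pos_is_sup: "is_sup_J E p m (\<lambda>_. 0) pos"
  unfolding is_sup_J_def le_J_def
proof (intro conjI allI impI)
  show "in_J E p pos" unfolding in_J_def using pos_measure zero_measure by fastforce
  show "is_measure E p (\<lambda>x. pos x - m x)" by (rule pos_minus_m_measure)
  show "is_measure E p (\<lambda>x. pos x - 0)" using pos_measure by simp
  fix t assume "in_J E p t \<and> is_measure E p (\<lambda>x. t x - m x) \<and> is_measure E p (\<lambda>x. t x - 0)"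
  then have t_m: "is_measure E p (\<lambda>x. t x - m x)" and t: "is_measure E p t" by auto
  have t_signed: "signed_measure E p t" using t unfolding is_measure_def by blast
  have pos_le_t: "pos x \<le> t x" if x: "x \<in> E" for x
  proof (rule pos_least[OF x])
    fix a b assume ab: "a \<in> E" "b \<in> E" "p a b = Some x"
    have "0 \<le> t b" "m a \<le> t a" using t t_m ab unfolding is_measure_def by auto
    then show "m a \<le> t x" using signed_measure_add_eq[OF t_signed ab] by simp
  qed
  show "is_measure E p (\<lambda>x. t x - pos x)"
    by (rule is_measureI[OF signed_measure_minus[OF t_signed pos_signed]]) (simp add: pos_le_t)
qed

lemma neg_is_inf: "is_inf_J E p m (\<lambda>_. 0) (\<lambda>x. m x - pos x)"
  unfolding is_inf_J_def le_J_def
proof (intro conjI allI impI)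
  obtain m1 m2 where M: "is_measure E p m1" "is_measure E p m2" "\<forall>x\<in>E. m x = m1 x - m2 x"
    using m_J unfolding in_J_def by blast
  have "is_measure E p (\<lambda>x. m2 x + pos x)"
  proof (rule is_measureI)
    show "signed_measure E p (\<lambda>x. m2 x + pos x)"
      using M(2) pos_signed unfolding is_measure_def by (blast intro: signed_measure_plus)
    show "0 \<le> m2 x + pos x" if "x \<in> E" for x
      using M(2) pos_ge_0[OF that] that unfolding is_measure_def by simp
  qed
  then show "in_J E p (\<lambda>x. m x - pos x)" unfolding in_J_def using M by fastforce
  show "is_measure E p (\<lambda>x. m x - (m x - pos x))" using pos_measure by simp
  show "is_measure E p (\<lambda>x. 0 - (m x - pos x))" using pos_minus_m_measure by simp
  fix t assume "in_J E p t \<and> is_measure E p (\<lambda>x. m x - t x) \<and> is_measure E p (\<lambda>x. 0 - t x)"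
  then have m_t: "is_measure E p (\<lambda>x. m x - t x)" and neg_t: "is_measure E p (\<lambda>x. 0 - t x)"
    by auto
  have "signed_measure E p (\<lambda>x. m x - (m x - t x))"
    using m_signed m_t signed_measure_minus unfolding is_measure_def by blast
  then have t_signed: "signed_measure E p t" by simp
  have pos_le: "pos x \<le> m x - t x" if x: "x \<in> E" for x
  proof (rule pos_least[OF x])
    fix a b assume ab: "a \<in> E" "b \<in> E" "p a b = Some x"
    have "t b \<le> m b" "t a \<le> 0" using m_t neg_t ab unfolding is_measure_def by auto
    then show "m a \<le> m x - t x"
      using m_add[OF ab] signed_measure_add_eq[OF t_signed ab] by simp
  qed
  show "is_measure E p (\<lambda>x. m x - pos x - t x)"
    by (rule is_measureI[OF signed_measure_minus[OF signed_measure_minus[OF m_signed pos_signed]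
          t_signed]]) (use pos_le in fastforce)
qed

section \<open>The total variation\<close>

lemma var_m_eq:
  assumes x: "x \<in> E"
  shows "var_m E p m x = pos x + (pos x - m x)"
proof -
  define V where
    "V = {(\<Sum>y\<leftarrow>xs. \<bar>m y\<bar>) | xs. xs \<noteq> [] \<and> set xs \<subseteq> E \<and> psum p xs = Some x}"
  have bound: "v \<le> pos x + (pos x - m x)" if "v \<in> V" for v
  proof -
    obtain xs where xs: "v = (\<Sum>y\<leftarrow>xs. \<bar>m y\<bar>)" "set xs \<subseteq> E" "psum p xs = Some x"
      using \<open>v \<in> V\<close> unfolding V_def by blast
    have "(\<Sum>y\<leftarrow>xs. \<bar>m y\<bar>) \<le> (\<Sum>y\<leftarrow>xs. pos y + (pos y - m y))"
      using xs(2) pos_ge_m pos_ge_0 by (intro sum_list_mono) fastforce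
    also have "\<dots> = pos x + (pos x - m x)"
      using signed_measure_psum[OF signed_measure_plus[OF pos_signed
            signed_measure_minus[OF pos_signed m_signed]] xs(2,3)] by simp
    finally show ?thesis using xs(1) by simp
  qed
  have two_terms: "\<bar>m a\<bar> + \<bar>m b\<bar> \<in> V" if "a \<in> E" "b \<in> E" "p a b = Some x" for a b
    unfolding V_def using that by (intro CollectI exI[of _ "[a, b]"]) simp
  have bdd: "bdd_above V" using bound by (intro bdd_aboveI[where M = "pos x + (pos x - m x)"])
  have "Sup V \<le> pos x + (pos x - m x)"
    using two_terms[OF x zero_in right_zero[OF x]] bound by (intro cSup_least) auto
  moreover have "pos x \<le> (Sup V + m x) / 2"
  proof (rule pos_least[OF x])
    fix a b assume ab: "a \<in> E" "b \<in> E" "p a b = Some x"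
    have "\<bar>m a\<bar> + \<bar>m b\<bar> \<le> Sup V" using cSup_upper[OF two_terms[OF ab] bdd] .
    moreover have "m a \<le> \<bar>m a\<bar>" "- m b \<le> \<bar>m b\<bar>" by simp_all
    ultimately show "m a \<le> (Sup V + m x) / 2" using m_add[OF ab] by simp
  qed
  then have "2 * pos x \<le> Sup V + m x" by simp
  ultimately have "Sup V = pos x + (pos x - m x)" by linarith
  then show ?thesis unfolding var_m_def V_def[symmetric] .
qed

end

theorem proposition4p5:
  fixes E :: "'a set" and p :: "'a \<Rightarrow> 'a \<Rightarrow> 'a option" and z u :: 'a
    and m :: "'a \<Rightarrow> real"
  assumes "pseudo_effect_algebra E p z u"
    and "RDP E p"
    and "in_J E p m"
  shows "(\<exists>mp mn. is_sup_J E p m (\<lambda>_. 0) mp \<and> is_inf_J E p m (\<lambda>_. 0) mn)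
    \<and> (\<forall>mp mn. is_sup_J E p m (\<lambda>_. 0) mp \<and> is_inf_J E p m (\<lambda>_. 0) mn \<longrightarrow>
         (\<forall>x\<in>E. var_m E p m x = mp x + (- mn x)))"
proof -
  interpret jordan_setting E p z u m
    using assms by unfold_locales
  have "var_m E p m x = mp x + - mn x"
    if "is_sup_J E p m (\<lambda>_. 0) mp" "is_inf_J E p m (\<lambda>_. 0) mn" "x \<in> E" for mp mn x
    using var_m_eq[OF that(3)]
      is_sup_J_unique[OF that(1) pos_is_sup that(3)]
      is_inf_J_unique[OF that(2) neg_is_inf that(3)] by simp
  then show ?thesis using pos_is_sup neg_is_inf by blast
qed

end
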